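(* Let $\{X_\alpha\}$ be an arbitrary family (indexed by an arbitrary set) of positive real-valued random variables, with distribution functions $F_\alpha(t)=\mathbb{P}(X_\alpha\le t)$. The following are equivalent: (i) there exists an integrable random variable $Y$ such that $X_\alpha \le_{\mathrm{icx}} Y$ for all $\alpha$; (ii) $\{X_\alpha\}$ is uniformly integrable, i.e. $\sup_\alpha \mathbb{E}\, X_\alpha 1(X_\alpha>t)\to 0$ as $t\to\infty$; (iii) $\lim_{t\to\infty}\sup_\alpha \int_t^\infty (1-F_\alpha(u))\,du = 0$.
   Context: "Positive" means nonnegative. The random variables need not be defined on a common probability space; each $X_\alpha$ lives on its own probability space and $\mathbb{E}$ denotes expectation there. For positive random variables $X_1,X_2$, $X_1\le_{\mathrm{icx}} X_2$ (increasing convex order) means $\mathbb{E}\phi(X_1)\le\mathbb{E}\phi(X_2)$ for all increasing (nondecreasing) convex functions $\phi:\mathbb{R}_+\to\mathbb{R}_+$; equivalently, $\mathbb{E}(X_1-t)_+\le \mathbb{E}(X_2-t)_+$ for all $t\ge 0$, where $x_+=\max(x,0)$. *)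

theory Defs
  imports "HOL-Probability.Probability"
begin

definition pos_rv :: "'a measure \<Rightarrow> ('a \<Rightarrow> real) \<Rightarrow> bool" where
  "pos_rv M X \<longleftrightarrow> prob_space M \<and> X \<in> borel_measurable M \<and> (\<forall>x\<in>space M. 0 \<le> X x)"

definition icx_le :: "'a measure \<Rightarrow> ('a \<Rightarrow> real) \<Rightarrow> 'b measure \<Rightarrow> ('b \<Rightarrow> real) \<Rightarrow> bool" where
  "icx_le M1 X1 M2 X2 \<longleftrightarrow>
     (\<forall>\<phi> :: real \<Rightarrow> real. mono_on {0..} \<phi> \<and> convex_on {0..} \<phi> \<and> (\<forall>x\<ge>0. 0 \<le> \<phi> x) \<longrightarrow>
        (\<integral>\<^sup>+ x. ennreal (\<phi> (X1 x)) \<partial>M1) \<le> (\<integral>\<^sup>+ y. ennreal (\<phi> (X2 y)) \<partial>M2))"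

definition distr_fun :: "'a measure \<Rightarrow> ('a \<Rightarrow> real) \<Rightarrow> real \<Rightarrow> real" where
  "distr_fun M X t = measure M {x \<in> space M. X x \<le> t}"

end

theory Submission
  imports Defs
begin

text \<open>
  Everything is routed through the
  stop-loss transform  t \<mapsto> E max(X - t, 0)  and the upper envelope of these transforms over
  the family; each of the three conditions is shown to be equivalent to the envelope vanishing at
  infinity.
  \<^item> Stop-loss basics: the layer-cake formula (on [0, \<infinity>) the function in (iii) is the envelope), the
    two-sided comparison with the tail expectation E X 1(X > t) (condition (ii)), and the fact that
    increasing convex order implies stop-loss order.
  \<^item> Conversely, stop-loss order implies increasing convex order: a nondecreasing convex \<phi> on
    [0, \<infinity>) is the pointwise limit from below of nonnegative combinations of hinges
    max(x - s, 0) (piecewise-linear interpolation on finer and finer grids); Fatou's lemma passes to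
    the limit.
  \<^item> If the envelope vanishes, a mixture of point masses at geometrically chosen levels yields an
    integrable variable whose stop-loss transform dominates the envelope, hence dominates every
    member of the family in increasing convex order.
\<close>

definition tail_expectation :: "'a measure \<Rightarrow> ('a \<Rightarrow> real) \<Rightarrow> real \<Rightarrow> ennreal" where
  "tail_expectation M X t = (\<integral>\<^sup>+ x. ennreal (X x * indicator {t<..} (X x)) \<partial>M)"

definition stop_loss :: "'a measure \<Rightarrow> ('a \<Rightarrow> real) \<Rightarrow> real \<Rightarrow> ennreal" where
  "stop_loss M X t = (\<integral>\<^sup>+ x. ennreal (max 0 (X x - t)) \<partial>M)"

text \<open>Layer-cake formula: the integrated survival function over [t, \<infinity>) is the stop-loss
  transform E max(X - t, 0) (Fubini--Tonelli applied to the indicator of t \<le> u < X).\<close>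
lemma survival_tail_eq_stop_loss:
  assumes P: "pos_rv M X" and t: "0 \<le> t"
  shows "(\<integral>\<^sup>+ u. ennreal (indicator {t..} u * (1 - distr_fun M X u)) \<partial>lborel) = stop_loss M X t"
proof -
  interpret prob_space M using P by (simp add: pos_rv_def)
  have [measurable]: "X \<in> borel_measurable M" using P by (simp add: pos_rv_def)
  interpret pair_sigma_finite lborel M
    by (simp add: pair_sigma_finite.intro lborel.sigma_finite_measure_axioms sigma_finite_measure_axioms)
  define between where "between = (\<lambda>(u::real, x). if t \<le> u \<and> u < X x then 1 else 0 :: ennreal)"
  have between_measurable: "between \<in> borel_measurable (lborel \<Otimes>\<^sub>M M)"
    unfolding between_def by measurable
  have inner_M: "ennreal (indicator {t..} u * (1 - distr_fun M X u)) = (\<integral>\<^sup>+ x. between (u, x) \<partial>M)" for u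
  proof (cases "t \<le> u")
    case True
    have le_event: "{x \<in> space M. X x \<le> u} \<in> events" by measurable
    have "1 - distr_fun M X u = prob (space M - {x \<in> space M. X x \<le> u})"
      unfolding distr_fun_def using prob_compl[OF le_event] by simp
    also have "space M - {x \<in> space M. X x \<le> u} = {x \<in> space M. u < X x}" by auto
    finally have "ennreal (1 - distr_fun M X u) = emeasure M {x \<in> space M. u < X x}"
      by (simp add: emeasure_eq_measure)
    also have "\<dots> = (\<integral>\<^sup>+ x. indicator {x \<in> space M. u < X x} x \<partial>M)"
      by (rule nn_integral_indicator[symmetric]) measurable
    also have "\<dots> = (\<integral>\<^sup>+ x. between (u, x) \<partial>M)"
      by (rule nn_integral_cong) (auto simp: between_def True indicator_def)
    finally show ?thesis using True by simp
  qed (simp add: between_def)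
  have inner_lborel: "(\<integral>\<^sup>+ u. between (u, x) \<partial>lborel) = ennreal (max 0 (X x - t))" for x
  proof (cases "t \<le> X x")
    case True
    have "(\<integral>\<^sup>+ u. between (u, x) \<partial>lborel) = (\<integral>\<^sup>+ u. indicator {t..<X x} u \<partial>lborel)"
      by (rule nn_integral_cong) (auto simp: between_def indicator_def)
    then show ?thesis using True by simp
  next
    case False
    then have "between (u, x) = 0" for u by (auto simp: between_def)
    then show ?thesis using False by simp
  qed
  have "(\<integral>\<^sup>+ u. ennreal (indicator {t..} u * (1 - distr_fun M X u)) \<partial>lborel)
      = (\<integral>\<^sup>+ u. (\<integral>\<^sup>+ x. between (u, x) \<partial>M) \<partial>lborel)" by (simp add: inner_M)
  also have "\<dots> = (\<integral>\<^sup>+ x. (\<integral>\<^sup>+ u. between (u, x) \<partial>lborel) \<partial>M)"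
    using Fubini[OF between_measurable] by simp
  also have "\<dots> = stop_loss M X t" by (simp add: inner_lborel stop_loss_def)
  finally show ?thesis .
qed

lemma stop_loss_le_tail_expectation:
  assumes "pos_rv M X" "0 \<le> t"
  shows "stop_loss M X t \<le> tail_expectation M X t"
  unfolding stop_loss_def tail_expectation_def
proof (rule nn_integral_mono)
  fix x assume "x \<in> space M"
  then have "0 \<le> X x" using assms by (auto simp: pos_rv_def)
  then show "ennreal (max 0 (X x - t)) \<le> ennreal (X x * indicator {t<..} (X x))"
    using assms by (intro ennreal_leI) (auto simp: indicator_def)
qed

lemma tail_expectation_le_stop_loss:
  assumes "pos_rv M X" "0 \<le> t"
  shows "tail_expectation M X (2 * t) \<le> 2 * stop_loss M X t"
proof -
  have [measurable]: "X \<in> borel_measurable M" using assms by (auto simp: pos_rv_def)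
  have "tail_expectation M X (2 * t) \<le> (\<integral>\<^sup>+ x. 2 * ennreal (max 0 (X x - t)) \<partial>M)"
    unfolding tail_expectation_def
  proof (rule nn_integral_mono)
    fix x assume "x \<in> space M"
    then have "0 \<le> X x" using assms by (auto simp: pos_rv_def)
    then have "ennreal (X x * indicator {2*t<..} (X x)) \<le> ennreal (2 * max 0 (X x - t))"
      using assms by (intro ennreal_leI) (auto simp: indicator_def)
    then show "ennreal (X x * indicator {2*t<..} (X x)) \<le> 2 * ennreal (max 0 (X x - t))"
      by (simp add: ennreal_mult)
  qed
  also have "\<dots> = 2 * stop_loss M X t" unfolding stop_loss_def by (rule nn_integral_cmult) auto
  finally show ?thesis .
qed

lemma stop_loss_antimono: "s \<le> t \<Longrightarrow> stop_loss M X t \<le> stop_loss M X s"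
  unfolding stop_loss_def by (intro nn_integral_mono ennreal_leI) auto

lemma stop_loss_zero_le:
  assumes "pos_rv M X" "0 \<le> T"
  shows "stop_loss M X 0 \<le> ennreal T + stop_loss M X T"
proof -
  interpret prob_space M using assms by (simp add: pos_rv_def)
  have [measurable]: "X \<in> borel_measurable M" using assms by (auto simp: pos_rv_def)
  have "stop_loss M X 0 \<le> (\<integral>\<^sup>+ x. ennreal T + ennreal (max 0 (X x - T)) \<partial>M)"
    unfolding stop_loss_def
  proof (rule nn_integral_mono)
    fix x
    have "ennreal (max 0 (X x - 0)) \<le> ennreal (T + max 0 (X x - T))"
      using assms by (intro ennreal_leI) auto
    then show "ennreal (max 0 (X x - 0)) \<le> ennreal T + ennreal (max 0 (X x - T))"
      using assms by (simp add: ennreal_plus)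
  qed
  also have "\<dots> = ennreal T + stop_loss M X T" unfolding stop_loss_def
    by (subst nn_integral_add) (auto simp: emeasure_space_1)
  finally show ?thesis .
qed

text \<open>The hinge functions x \<mapsto> max(x - t, 0) are increasing and convex, so the increasing convex
  order implies the stop-loss order.\<close>
lemma convex_on_hinge: "convex_on {0..} (\<lambda>x::real. max 0 (x - t))"
proof (rule convex_onI)
  fix u x y :: real assume u: "0 < u" "u < 1"
  have "(1 - u) * (x - t) \<le> (1 - u) * max 0 (x - t)" "u * (y - t) \<le> u * max 0 (y - t)"
    using u by (intro mult_left_mono; simp)+
  moreover have "0 \<le> (1 - u) * max 0 (x - t)" "0 \<le> u * max 0 (y - t)" using u by auto
  moreover have "(1 - u) *\<^sub>R x + u *\<^sub>R y - t = (1 - u) * (x - t) + u * (y - t)"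
    by (simp add: algebra_simps)
  ultimately show "max 0 ((1 - u) *\<^sub>R x + u *\<^sub>R y - t) \<le> (1 - u) * max 0 (x - t) + u * max 0 (y - t)"
    by linarith
qed auto

lemma icx_imp_stop_loss_le:
  assumes "icx_le M1 X1 M2 X2" "0 \<le> t"
  shows "stop_loss M1 X1 t \<le> stop_loss M2 X2 t"
proof -
  have "mono_on {0..} (\<lambda>x::real. max 0 (x - t))" by (rule mono_onI) auto
  then show ?thesis using assms convex_on_hinge[of t] unfolding icx_le_def stop_loss_def by auto
qed

lemma antimono_tendsto_at_top:
  fixes f :: "real \<Rightarrow> ennreal"
  assumes anti: "\<And>s t. 0 \<le> s \<Longrightarrow> s \<le> t \<Longrightarrow> f t \<le> f s" and lim: "(\<lambda>n. f (real n)) \<longlonglongrightarrow> 0"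
  shows "(f \<longlongrightarrow> 0) at_top"
proof -
  have "filterlim (\<lambda>t::real. nat \<lfloor>t\<rfloor>) sequentially at_top"
    by (rule filterlim_compose[OF filterlim_nat_sequentially filterlim_floor_sequentially])
  then have floor_lim: "((\<lambda>t::real. f (real (nat \<lfloor>t\<rfloor>))) \<longlongrightarrow> 0) at_top"
    by (rule filterlim_compose[OF lim])
  have below_floor: "eventually (\<lambda>t::real. f t \<le> f (real (nat \<lfloor>t\<rfloor>))) at_top"
    using eventually_ge_at_top[of "0::real"] by eventually_elim (intro anti; simp)
  show ?thesis by (rule tendsto_sandwich[OF _ below_floor tendsto_const floor_lim]) simp
qed

text \<open>The stop-loss transform of an integrable positive variable vanishes at infinity
  (dominated convergence with dominating function Y).\<close>
lemma integrable_imp_stop_loss_tendsto: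
  assumes P: "pos_rv N Y" and int: "integrable N Y"
  shows "(stop_loss N Y \<longlongrightarrow> 0) at_top"
proof (rule antimono_tendsto_at_top)
  show "stop_loss N Y t \<le> stop_loss N Y s" if "s \<le> t" for s t using stop_loss_antimono that .
  have [measurable]: "Y \<in> borel_measurable N" and Y_nonneg: "\<And>y. y \<in> space N \<Longrightarrow> 0 \<le> Y y"
    using P by (auto simp: pos_rv_def)
  have "(\<lambda>n. (\<integral>\<^sup>+ y. ennreal (max 0 (Y y - real n)) \<partial>N)) \<longlonglongrightarrow> (\<integral>\<^sup>+ y. 0 \<partial>N)"
  proof (rule nn_integral_dominated_convergence[where w="\<lambda>y. ennreal (Y y)"])
    show "(\<integral>\<^sup>+ y. ennreal (Y y) \<partial>N) < \<infinity>"
      using integrableD(2)[OF int] by (simp add: top.not_eq_extremum)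
    show "AE y in N. ennreal (max 0 (Y y - real n)) \<le> ennreal (Y y)" for n
      using Y_nonneg by (intro AE_I2 ennreal_leI) auto
    show "AE y in N. (\<lambda>n. ennreal (max 0 (Y y - real n))) \<longlonglongrightarrow> 0"
    proof (intro AE_I2 tendsto_eventually)
      fix y
      obtain n0 :: nat where "Y y \<le> real n0" using real_arch_simple by blast
      then show "eventually (\<lambda>n. ennreal (max 0 (Y y - real n)) = 0) sequentially"
        unfolding eventually_sequentially by (intro exI[of _ n0]) auto
    qed
  qed auto
  then show "(\<lambda>n. stop_loss N Y (real n)) \<longlonglongrightarrow> 0" by (simp add: stop_loss_def)
qed

text \<open>Piecewise-linear approximation of \<phi> on the grid of mesh h with N knots: grid_slope is the
  slope of \<phi> on the k-th cell, slope_jump the increase of slope at the k-th knot, and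
  hinge_approx the corresponding combination of hinges, which follows the chords of \<phi>
  delayed by one cell.\<close>
definition grid_slope :: "(real \<Rightarrow> real) \<Rightarrow> real \<Rightarrow> nat \<Rightarrow> real" where
  "grid_slope \<phi> h k = (\<phi> (real (Suc k) * h) - \<phi> (real k * h)) / h"

definition slope_jump :: "(real \<Rightarrow> real) \<Rightarrow> real \<Rightarrow> nat \<Rightarrow> real" where
  "slope_jump \<phi> h k =
     (case k of 0 \<Rightarrow> grid_slope \<phi> h 0 | Suc j \<Rightarrow> grid_slope \<phi> h (Suc j) - grid_slope \<phi> h j)"

definition hinge_approx :: "(real \<Rightarrow> real) \<Rightarrow> real \<Rightarrow> nat \<Rightarrow> real \<Rightarrow> real" where
  "hinge_approx \<phi> h N x = \<phi> 0 + (\<Sum>k<N. slope_jump \<phi> h k * max 0 (x - real (Suc k) * h))"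

lemma grid_cell:
  fixes h x :: real
  assumes h: "0 < h" and N: "1 \<le> N" and x: "h \<le> x"
  obtains j where "j < N" "real (Suc j) * h \<le> x" "x \<le> real (Suc (Suc j)) * h \<or> Suc j = N"
proof -
  define J where "J = nat \<lfloor>x / h\<rfloor>"
  have "1 \<le> x / h" using x h by simp
  then have "1 \<le> \<lfloor>x / h\<rfloor>" by linarith
  then have J1: "1 \<le> J" and rJ: "real J = of_int \<lfloor>x / h\<rfloor>" unfolding J_def by linarith+
  have "real J \<le> x / h" "x / h < real J + 1" using rJ by linarith+
  then have lo: "real J * h \<le> x" and hi: "x < real (Suc J) * h" using h by (auto simp: field_simps)
  show ?thesis
  proof (cases "J \<le> N")
    case True
    then show ?thesis using J1 lo hi by (intro that[of "J - 1"]) (auto simp: of_nat_diff)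
  next
    case False
    have "real N * h \<le> real J * h" using False h by (intro mult_right_mono) auto
    then show ?thesis using N lo by (intro that[of "N - 1"]) (auto simp: of_nat_diff)
  qed
qed

lemma chord_slope_mono:
  fixes \<phi> :: "real \<Rightarrow> real"
  assumes cvx: "convex_on {0..} \<phi>" and "0 \<le> a" "a < c" "c \<le> x"
  shows "(\<phi> c - \<phi> a) / (c - a) \<le> (\<phi> x - \<phi> a) / (x - a)"
proof (cases "c = x")
  case False
  then have "(\<phi> a - \<phi> c) / (a - c) \<le> (\<phi> a - \<phi> x) / (a - x)"
    using assms by (intro convex_on_slope_le(1)[OF cvx]) auto
  then show ?thesis by (metis minus_diff_eq minus_divide_divide)
qed simp

context
  fixes \<phi> :: "real \<Rightarrow> real" and h :: real
  assumes mono: "mono_on {0..} \<phi>" and cvx: "convex_on {0..} \<phi>" and h: "0 < h"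
begin

lemma grid_slope_nonneg: "0 \<le> grid_slope \<phi> h k"
proof -
  have "\<phi> (real k * h) \<le> \<phi> (real (Suc k) * h)"
    using h by (intro mono_onD[OF mono]) auto
  then show ?thesis using h by (simp add: grid_slope_def)
qed

lemma grid_slope_mono: "grid_slope \<phi> h j \<le> grid_slope \<phi> h (Suc j)"
proof -
  let ?a = "real j * h" and ?c = "real (Suc j) * h" and ?b = "real (Suc (Suc j)) * h"
  have "(\<phi> ?a - \<phi> ?c) / (?a - ?c) \<le> (\<phi> ?c - \<phi> ?b) / (?c - ?b)"
    using h by (intro order_trans[OF convex_on_slope_le[OF cvx, of ?a ?b ?c]]) auto
  moreover have "?a - ?c = - h" "?c - ?b = - h" by (simp_all add: algebra_simps)
  ultimately show ?thesis by (metis grid_slope_def minus_diff_eq minus_divide_divide)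
qed

lemma slope_jump_nonneg: "0 \<le> slope_jump \<phi> h k"
  using grid_slope_nonneg grid_slope_mono by (cases k) (auto simp: slope_jump_def)

lemma slope_jump_telescope:
  "(\<Sum>k<Suc j. slope_jump \<phi> h k * (x - real (Suc k) * h))
     = grid_slope \<phi> h j * (x - real (Suc j) * h) + \<phi> (real j * h) - \<phi> 0"
proof (induction j)
  case 0
  then show ?case by (simp add: slope_jump_def)
next
  case (Suc j)
  have step: "grid_slope \<phi> h j * h = \<phi> (real (Suc j) * h) - \<phi> (real j * h)"
    using h by (simp add: grid_slope_def)
  have "(\<Sum>k<Suc (Suc j). slope_jump \<phi> h k * (x - real (Suc k) * h))
     = grid_slope \<phi> h j * (x - real (Suc j) * h) + \<phi> (real j * h) - \<phi> 0
       + (grid_slope \<phi> h (Suc j) - grid_slope \<phi> h j) * (x - real (Suc (Suc j)) * h)"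
    using Suc by (simp add: slope_jump_def)
  also have "\<dots> = grid_slope \<phi> h (Suc j) * (x - real (Suc (Suc j)) * h)
       + \<phi> (real j * h) - \<phi> 0 + grid_slope \<phi> h j * h"
    by (simp add: algebra_simps)
  finally show ?case using step by simp
qed

lemma hinge_approx_on_cell:
  assumes j: "j < N" and lo: "real (Suc j) * h \<le> x"
    and hi: "x \<le> real (Suc (Suc j)) * h \<or> Suc j = N"
  shows "hinge_approx \<phi> h N x = \<phi> (real j * h) + grid_slope \<phi> h j * (x - real (Suc j) * h)"
proof -
  have "(\<Sum>k<N. slope_jump \<phi> h k * max 0 (x - real (Suc k) * h))
      = (\<Sum>k<Suc j. slope_jump \<phi> h k * (x - real (Suc k) * h))"
  proof (rule sum.mono_neutral_cong_right)
    show "\<forall>i\<in>{..<N} - {..<Suc j}. slope_jump \<phi> h i * max 0 (x - real (Suc i) * h) = 0"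
    proof
      fix i assume "i \<in> {..<N} - {..<Suc j}"
      then have "Suc j \<le> i" "i < N" by auto
      then have "x \<le> real (Suc i) * h" using hi h
        by (auto intro: order.trans[OF _ mult_right_mono])
      then show "slope_jump \<phi> h i * max 0 (x - real (Suc i) * h) = 0" by simp
    qed
    show "slope_jump \<phi> h k * max 0 (x - real (Suc k) * h) = slope_jump \<phi> h k * (x - real (Suc k) * h)"
      if "k \<in> {..<Suc j}" for k
    proof -
      have "real (Suc k) * h \<le> real (Suc j) * h" using that h by (intro mult_right_mono) auto
      then show ?thesis using lo by simp
    qed
  qed (use j in auto)
  then show ?thesis unfolding hinge_approx_def slope_jump_telescope by simp
qed

lemma hinge_approx_zero: "hinge_approx \<phi> h N 0 = \<phi> 0"
  using h by (simp add: hinge_approx_def)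

text \<open>The approximation never exceeds \<phi>: on each cell it is a chord of \<phi>
  shifted to the right by one grid step.\<close>
lemma hinge_approx_le:
  assumes N: "1 \<le> N" and x: "0 \<le> x"
  shows "hinge_approx \<phi> h N x \<le> \<phi> x"
proof (cases "x < h")
  case True
  then have "x - real (Suc k) * h \<le> 0" for k
    using h by (smt (verit) mult_le_cancel_right1 of_nat_0_le_iff of_nat_Suc)
  then have "hinge_approx \<phi> h N x = \<phi> 0" by (simp add: hinge_approx_def)
  then show ?thesis using mono_onD[OF mono, of 0 x] x by simp
next
  case False
  then obtain j where j: "j < N" "real (Suc j) * h \<le> x"
    and hi: "x \<le> real (Suc (Suc j)) * h \<or> Suc j = N"
    using grid_cell[OF h N] by (metis not_less)
  let ?a = "real j * h" and ?c = "real (Suc j) * h"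
  have ac: "?a < ?c" using h by simp
  have "grid_slope \<phi> h j = (\<phi> ?c - \<phi> ?a) / (?c - ?a)"
    by (simp add: grid_slope_def algebra_simps)
  also have "\<dots> \<le> (\<phi> x - \<phi> ?a) / (x - ?a)"
    using h j(2) by (intro chord_slope_mono[OF cvx]) auto
  finally have "grid_slope \<phi> h j * (x - ?a) \<le> \<phi> x - \<phi> ?a"
    using ac j(2) by (simp add: le_divide_eq)
  moreover have "grid_slope \<phi> h j * (x - ?c) \<le> grid_slope \<phi> h j * (x - ?a)"
    using grid_slope_nonneg[of j] ac by (intro mult_left_mono) auto
  ultimately show ?thesis using hinge_approx_on_cell[OF j hi] by simp
qed

lemma hinge_approx_ge_lagged:
  assumes "2 * h \<le> x" "x \<le> real N * h"
  shows "\<phi> (x - 2 * h) \<le> hinge_approx \<phi> h N x"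
proof -
  have N: "1 \<le> N" using assms h by (cases N) auto
  obtain j where j: "j < N" "real (Suc j) * h \<le> x"
    and hi: "x \<le> real (Suc (Suc j)) * h \<or> Suc j = N"
    using grid_cell[OF h N] assms h by (metis mult_2 le_add_same_cancel1 less_imp_le order.trans)
  have hi': "x \<le> real (Suc (Suc j)) * h"
    using hi assms(2) h by (auto simp: field_simps)
  have "\<phi> (x - 2 * h) \<le> \<phi> (real j * h)"
    using hi' assms(1) by (intro mono_onD[OF mono]) (auto simp: field_simps)
  also have "\<dots> \<le> hinge_approx \<phi> h N x"
    using hinge_approx_on_cell[OF j] hi' grid_slope_nonneg[of j] j(2) by simp
  finally show ?thesis .
qed

end

text \<open>Refining the grid (mesh 1/(n+1), reaching out to n+1) the approximations converge to \<phi>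
  on [0, \<infinity>), squeezed between \<phi>(x - 2h) and \<phi>(x) and using continuity of \<phi> on (0, \<infinity>).\<close>
lemma hinge_approx_tendsto:
  fixes \<phi> :: "real \<Rightarrow> real"
  assumes mono: "mono_on {0..} \<phi>" and cvx: "convex_on {0..} \<phi>" and x: "0 \<le> x"
  shows "(\<lambda>n. hinge_approx \<phi> (inverse (real (Suc n))) (Suc n * Suc n) x) \<longlonglongrightarrow> \<phi> x"
proof -
  define hn where "hn n = inverse (real (Suc n))" for n
  have hn_pos: "0 < hn n" for n by (simp add: hn_def)
  have upper: "hinge_approx \<phi> (hn n) (Suc n * Suc n) x \<le> \<phi> x" for n
    using hinge_approx_le[OF mono cvx hn_pos] x by simp
  show ?thesis
  proof (cases "x = 0")
    case True
    then show ?thesis using hinge_approx_zero[OF mono cvx] by (simp add: hn_def[symmetric] hn_pos)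
  next
    case False
    with x have x_pos: "0 < x" by simp
    have hn_lim: "hn \<longlonglongrightarrow> 0" unfolding hn_def by (rule LIMSEQ_inverse_real_of_nat)
    have "continuous_on {0<..} \<phi>"
      by (intro convex_on_continuous convex_on_subset[OF cvx]) auto
    then have "isCont \<phi> x" using x_pos continuous_on_eq_continuous_at[of "{0<..}" \<phi>] by auto
    then have lagged_lim: "(\<lambda>n. \<phi> (x - 2 * hn n)) \<longlonglongrightarrow> \<phi> x"
      using isCont_tendsto_compose[of x \<phi> "\<lambda>n. x - 2 * hn n"]
        tendsto_diff[OF tendsto_const[of x] tendsto_mult[OF tendsto_const[of 2] hn_lim]] by simp
    have "eventually (\<lambda>n. hn n < x / 2) sequentially"
      using order_tendstoD(2)[OF hn_lim, of "x / 2"] x_pos by simp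
    moreover have "eventually (\<lambda>n. x \<le> real (Suc n)) sequentially"
    proof -
      obtain n0 :: nat where "x \<le> real n0" using real_arch_simple by blast
      then show ?thesis unfolding eventually_sequentially by (intro exI[of _ n0]) auto
    qed
    ultimately have lower: "eventually (\<lambda>n. \<phi> (x - 2 * hn n) \<le> hinge_approx \<phi> (hn n) (Suc n * Suc n) x) sequentially"
    proof eventually_elim
      case (elim n)
      have "real (Suc n * Suc n) * hn n = real (Suc n)"
        unfolding hn_def of_nat_mult by (simp del: of_nat_Suc)
      then show ?case using elim by (intro hinge_approx_ge_lagged[OF mono cvx hn_pos]) auto
    qed
    show ?thesis
      using tendsto_sandwich[OF lower _ lagged_lim tendsto_const] upper by (simp add: hn_def)
  qed
qed


lemma nn_integral_hinge_approx:
  assumes P: "pos_rv M X" and mono: "mono_on {0..} \<phi>" and cvx: "convex_on {0..} \<phi>"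
    and \<phi>0: "0 \<le> \<phi> 0" and h: "0 < h"
  shows "(\<integral>\<^sup>+ x. ennreal (hinge_approx \<phi> h N (X x)) \<partial>M)
       = ennreal (\<phi> 0) + (\<Sum>k<N. ennreal (slope_jump \<phi> h k) * stop_loss M X (real (Suc k) * h))"
proof -
  interpret prob_space M using P by (simp add: pos_rv_def)
  have [measurable]: "X \<in> borel_measurable M" using P by (simp add: pos_rv_def)
  let ?c = "slope_jump \<phi> h" and ?hinge = "\<lambda>k x. max 0 (X x - real (Suc k) * h)"
  have c_nonneg: "0 \<le> ?c k" for k by (rule slope_jump_nonneg[OF mono cvx h])
  have split: "ennreal (hinge_approx \<phi> h N (X x))
      = ennreal (\<phi> 0) + (\<Sum>k<N. ennreal (?c k) * ennreal (?hinge k x))" for x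
  proof -
    have "ennreal (hinge_approx \<phi> h N (X x)) = ennreal (\<phi> 0) + ennreal (\<Sum>k<N. ?c k * ?hinge k x)"
      unfolding hinge_approx_def using \<phi>0 c_nonneg by (intro ennreal_plus) (auto intro!: sum_nonneg)
    also have "ennreal (\<Sum>k<N. ?c k * ?hinge k x) = (\<Sum>k<N. ennreal (?c k * ?hinge k x))"
      by (rule sum_ennreal[symmetric]) (use c_nonneg in auto)
    also have "\<dots> = (\<Sum>k<N. ennreal (?c k) * ennreal (?hinge k x))"
      by (intro sum.cong refl ennreal_mult) (use c_nonneg in auto)
    finally show ?thesis .
  qed
  have "(\<integral>\<^sup>+ x. ennreal (hinge_approx \<phi> h N (X x)) \<partial>M)
      = (\<integral>\<^sup>+ x. ennreal (\<phi> 0) \<partial>M) + (\<integral>\<^sup>+ x. (\<Sum>k<N. ennreal (?c k) * ennreal (?hinge k x)) \<partial>M)"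
    unfolding split by (rule nn_integral_add) auto
  also have "(\<integral>\<^sup>+ x. (\<Sum>k<N. ennreal (?c k) * ennreal (?hinge k x)) \<partial>M)
      = (\<Sum>k<N. ennreal (?c k) * stop_loss M X (real (Suc k) * h))"
    unfolding stop_loss_def by (subst nn_integral_sum) (auto intro!: sum.cong nn_integral_cmult)
  finally show ?thesis by (simp add: emeasure_space_1)
qed

text \<open>Each hinge approximation is compared through the stop-loss transforms; Fatou's lemma passes to
  the limit on the left, and the approximations stay below \<phi> on the right.\<close>
lemma stop_loss_le_imp_icx:
  assumes P1: "pos_rv M1 X1" and P2: "pos_rv M2 X2"
    and le: "\<And>t. 0 < t \<Longrightarrow> stop_loss M1 X1 t \<le> stop_loss M2 X2 t"
  shows "icx_le M1 X1 M2 X2"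
  unfolding icx_le_def
proof (intro allI impI, elim conjE)
  fix \<phi> :: "real \<Rightarrow> real"
  assume mono: "mono_on {0..} \<phi>" and cvx: "convex_on {0..} \<phi>" and nonneg: "\<forall>x\<ge>0. 0 \<le> \<phi> x"
  have [measurable]: "X1 \<in> borel_measurable M1" "X2 \<in> borel_measurable M2"
    and X1_nonneg: "\<And>x. x \<in> space M1 \<Longrightarrow> 0 \<le> X1 x" and X2_nonneg: "\<And>x. x \<in> space M2 \<Longrightarrow> 0 \<le> X2 x"
    using P1 P2 by (auto simp: pos_rv_def)
  define hn where "hn n = inverse (real (Suc n))" for n
  define \<psi> where "\<psi> n = hinge_approx \<phi> (hn n) (Suc n * Suc n)" for n
  have hn_pos: "0 < hn n" for n by (simp add: hn_def)
  have \<phi>0: "0 \<le> \<phi> 0" using nonneg by simp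
  have [measurable]: "\<psi> n \<in> borel_measurable borel" for n
    unfolding \<psi>_def hinge_approx_def by measurable
  have \<psi>_le: "\<psi> n x \<le> \<phi> x" if "0 \<le> x" for n x
    unfolding \<psi>_def using hinge_approx_le[OF mono cvx hn_pos _ that] by simp
  have \<psi>_cmp: "(\<integral>\<^sup>+ x. ennreal (\<psi> n (X1 x)) \<partial>M1) \<le> (\<integral>\<^sup>+ y. ennreal (\<psi> n (X2 y)) \<partial>M2)" for n
    unfolding \<psi>_def nn_integral_hinge_approx[OF P1 mono cvx \<phi>0 hn_pos]
      nn_integral_hinge_approx[OF P2 mono cvx \<phi>0 hn_pos]
    using hn_pos by (intro add_left_mono sum_mono mult_left_mono le) auto
  have \<psi>_lim: "ennreal (\<phi> (X1 x)) = liminf (\<lambda>n. ennreal (\<psi> n (X1 x)))" if "x \<in> space M1" for x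
  proof -
    have "(\<lambda>n. \<psi> n (X1 x)) \<longlonglongrightarrow> \<phi> (X1 x)"
      unfolding \<psi>_def hn_def using hinge_approx_tendsto[OF mono cvx X1_nonneg[OF that]] .
    then show ?thesis by (intro lim_imp_Liminf[symmetric] tendsto_ennrealI) simp_all
  qed
  have "(\<integral>\<^sup>+ x. ennreal (\<phi> (X1 x)) \<partial>M1) = (\<integral>\<^sup>+ x. liminf (\<lambda>n. ennreal (\<psi> n (X1 x))) \<partial>M1)"
    by (rule nn_integral_cong) (rule \<psi>_lim)
  also have "\<dots> \<le> liminf (\<lambda>n. (\<integral>\<^sup>+ x. ennreal (\<psi> n (X1 x)) \<partial>M1))"
    by (rule nn_integral_liminf) measurable
  also have "\<dots> \<le> liminf (\<lambda>n. (\<integral>\<^sup>+ y. ennreal (\<psi> n (X2 y)) \<partial>M2))"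
    by (rule Liminf_mono) (use \<psi>_cmp in auto)
  also have "\<dots> \<le> (\<integral>\<^sup>+ y. ennreal (\<phi> (X2 y)) \<partial>M2)"
    by (rule Liminf_le)
      (auto intro!: always_eventually nn_integral_mono ennreal_leI \<psi>_le X2_nonneg)
  finally show "(\<integral>\<^sup>+ x. ennreal (\<phi> (X1 x)) \<partial>M1) \<le> (\<integral>\<^sup>+ y. ennreal (\<phi> (X2 y)) \<partial>M2)" .
qed


text \<open>A mixture of point masses: for weights q with total mass at most 1 and atoms a with
  finite first moment, put mass q k on a k and the remaining mass on 0.  The resulting
  integrable variable has stop-loss transform at least q k * max(a k - t, 0) for every k.\<close>
lemma point_mass_mixture:
  fixes q a :: "nat \<Rightarrow> real"
  assumes q_nonneg: "\<And>k. 0 \<le> q k" and q_summable: "summable q" and q_total: "suminf q \<le> 1"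
    and a_nonneg: "\<And>k. 0 \<le> a k" and moment: "summable (\<lambda>k. q k * a k)"
  shows "\<exists>(N :: real measure) Y. pos_rv N Y \<and> integrable N Y \<and>
           (\<forall>k t. ennreal (q k * max 0 (a k - t)) \<le> stop_loss N Y t)"
proof -
  define w where "w k = (case k of 0 \<Rightarrow> 1 - suminf q | Suc j \<Rightarrow> q j)" for k
  define v where "v k = (case k of 0 \<Rightarrow> 0 | Suc j \<Rightarrow> a j)" for k
  have w_nonneg: "0 \<le> w k" for k using q_total q_nonneg by (cases k) (auto simp: w_def)
  have w_summable: "summable w" using q_summable by (subst summable_Suc_iff[symmetric]) (simp add: w_def)
  then have "suminf w = 1" using suminf_split_head[OF w_summable] by (simp add: w_def)
  then have "(\<integral>\<^sup>+ k. ennreal (w k) \<partial>count_space UNIV) = 1"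
    using w_nonneg w_summable by (simp add: nn_integral_count_space_nat suminf_ennreal2)
  then have pmf_p: "pmf (embed_pmf w) k = w k" for k by (rule pmf_embed_pmf[OF w_nonneg])
  define N where "N = measure_pmf (map_pmf v (embed_pmf w))"
  define Y where "Y = (\<lambda>y :: real. max 0 y)"
  have v_nonneg: "0 \<le> v k" for k using a_nonneg by (cases k) (auto simp: v_def)
  have pos: "pos_rv N Y"
    unfolding pos_rv_def N_def Y_def by (auto simp: measure_pmf.prob_space_axioms)
  have wv_summable: "summable (\<lambda>k. w k * v k)"
    using moment by (subst summable_Suc_iff[symmetric]) (simp add: w_def v_def)
  have "(\<integral>\<^sup>+ y. ennreal (Y y) \<partial>N) = (\<integral>\<^sup>+ k. ennreal (v k) \<partial>embed_pmf w)"
    using v_nonneg by (simp add: N_def Y_def)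
  also have "\<dots> = (\<Sum>k. ennreal (w k) * ennreal (v k))"
    by (simp add: nn_integral_measure_pmf nn_integral_count_space_nat pmf_p)
  also have "\<dots> = (\<Sum>k. ennreal (w k * v k))"
    using w_nonneg v_nonneg by (simp add: ennreal_mult)
  also have "\<dots> = ennreal (\<Sum>k. w k * v k)"
    using w_nonneg v_nonneg by (intro suminf_ennreal2 wv_summable) auto
  finally have "integrable N Y"
    by (intro integrableI_nonneg) (auto simp: N_def Y_def)
  moreover have "ennreal (q k * max 0 (a k - t)) \<le> stop_loss N Y t" for k t
  proof -
    have "ennreal (q k * max 0 (a k - t)) = ennreal (w (Suc k)) * ennreal (max 0 (max 0 (v (Suc k)) - t))"
      using q_nonneg a_nonneg by (simp add: w_def v_def ennreal_mult)
    also have "\<dots> = (\<integral>\<^sup>+ j. ennreal (max 0 (max 0 (v (Suc k)) - t)) * indicator {Suc k} j \<partial>embed_pmf w)"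
      by (subst nn_integral_cmult_indicator) (auto simp: emeasure_pmf_single pmf_p mult.commute)
    also have "\<dots> \<le> (\<integral>\<^sup>+ j. ennreal (max 0 (max 0 (v j) - t)) \<partial>embed_pmf w)"
      by (intro nn_integral_mono) (auto simp: indicator_def)
    also have "\<dots> = stop_loss N Y t" by (simp add: stop_loss_def N_def Y_def)
    finally show ?thesis .
  qed
  ultimately show ?thesis using pos by blast
qed

lemma vanishing_levels:
  fixes G :: "real \<Rightarrow> ennreal"
  assumes lim: "(G \<longlongrightarrow> 0) at_top" and e_pos: "\<And>k. 0 < e k"
  obtains U where "\<And>k. real k + c \<le> U k" "\<And>k t. U k < t \<Longrightarrow> G t \<le> ennreal (e (Suc k))"
proof -
  have "\<exists>T. \<forall>t\<ge>T. G t \<le> ennreal (e k)" for k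
  proof -
    have "eventually (\<lambda>t. G t < ennreal (e k)) at_top"
      using order_tendstoD(2)[OF lim, of "ennreal (e k)"] e_pos by simp
    then show ?thesis unfolding eventually_at_top_linorder by (auto intro: less_imp_le)
  qed
  then obtain T where T: "\<And>k t. T k \<le> t \<Longrightarrow> G t \<le> ennreal (e k)" by metis
  show ?thesis
  proof (rule that[of "\<lambda>k. max (real k + c) (T (Suc k))"])
    show "real k + c \<le> max (real k + c) (T (Suc k))" for k by simp
    show "G t \<le> ennreal (e (Suc k))" if "max (real k + c) (T (Suc k)) < t" for k t
      using that by (intro T) simp
  qed
qed

lemma halving_weights:
  fixes U :: "nat \<Rightarrow> real"
  assumes m: "0 < m" and U: "\<And>k. 2 * m \<le> U k"
  shows "summable (\<lambda>k. m * (1/2) ^ k / U k)" "(\<Sum>k. m * (1/2) ^ k / U k) \<le> 1"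
proof -
  let ?q = "\<lambda>k. m * (1/2) ^ k / U k"
  have q_nonneg: "0 \<le> ?q k" for k using m U[of k] by simp
  have q_le: "?q k \<le> (1/2) ^ Suc k" for k
  proof -
    have "?q k \<le> m * (1/2) ^ k / (2 * m)" using m U[of k] by (intro divide_left_mono) auto
    also have "\<dots> = (1/2) ^ Suc k" using m by simp
    finally show ?thesis .
  qed
  have half_sums: "(\<lambda>k. (1/2::real) ^ Suc k) sums 1"
    using sums_mult[OF geometric_sums[of "1/2::real"], of "1/2"] by simp
  show q_summable: "summable ?q"
    by (rule summable_comparison_test'[OF sums_summable[OF half_sums]])
      (metis q_nonneg q_le abs_of_nonneg real_norm_def)
  show "suminf ?q \<le> 1"
    using suminf_le[OF q_le q_summable sums_summable[OF half_sums]] sums_unique[OF half_sums] by simp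
qed

text \<open>Any bounded function G vanishing at infinity is dominated by the stop-loss transform of an
  integrable variable: atoms 2 U k at levels where G has dropped below m / 2^k, with masses
  (m / 2^k) / U k, give a stop-loss transform at least m / 2^k on (U (k-1), U k].\<close>
lemma stop_loss_dominating:
  fixes G :: "real \<Rightarrow> ennreal"
  assumes lim: "(G \<longlongrightarrow> 0) at_top" and bound: "\<And>t. 0 \<le> t \<Longrightarrow> G t \<le> ennreal m" and m: "0 < m"
  shows "\<exists>(N :: real measure) Y. pos_rv N Y \<and> integrable N Y \<and> (\<forall>t\<ge>0. G t \<le> stop_loss N Y t)"
proof -
  define e where "e k = m * (1/2) ^ k" for k :: nat
  have e_pos: "0 < e k" for k using m by (simp add: e_def)
  obtain U where U_ge: "\<And>k. real k + 2 * m \<le> U k"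
    and U_level: "\<And>k t. U k < t \<Longrightarrow> G t \<le> ennreal (e (Suc k))"
    using vanishing_levels[where e = e and c = "2 * m", OF lim e_pos] by blast
  define q where "q k = e k / U k" for k
  have U_ge_2m: "2 * m \<le> U k" and U_ge_k: "real k \<le> U k" for k
    using U_ge[of k] m by auto
  have U_pos: "0 < U k" for k using U_ge_2m[of k] m by linarith
  have q_nonneg: "0 \<le> q k" for k using e_pos[of k] U_pos[of k] by (simp add: q_def)
  have q_summable: "summable q" and q_total: "suminf q \<le> 1"
    unfolding q_def e_def using halving_weights[OF m U_ge_2m] by simp_all
  have "(\<lambda>k. q k * (2 * U k)) = (\<lambda>k. 2 * m * (1/2) ^ k)"
    using U_pos by (intro ext) (simp add: q_def e_def less_imp_neq[symmetric])
  then have moment: "summable (\<lambda>k. q k * (2 * U k))" by simp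
  have atoms_nonneg: "0 \<le> 2 * U k" for k using U_pos[of k] by simp
  obtain N :: "real measure" and Y where P: "pos_rv N Y" and int: "integrable N Y"
    and atoms: "\<And>k t. ennreal (q k * max 0 (2 * U k - t)) \<le> stop_loss N Y t"
    using point_mass_mixture[OF q_nonneg q_summable q_total atoms_nonneg moment] by blast
  have "G t \<le> stop_loss N Y t" if t: "0 \<le> t" for t
  proof -
    obtain n :: nat where "t \<le> real n" using real_arch_simple by blast
    then have "\<exists>k. t \<le> U k" using U_ge_k[of n] by (blast intro: order.trans)
    define k where "k = (LEAST k. t \<le> U k)"
    have t_le: "t \<le> U k" unfolding k_def by (rule LeastI_ex) fact
    have G_le: "G t \<le> ennreal (e k)"
    proof (cases k)
      case 0
      then show ?thesis using bound[OF t] by (simp add: e_def)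
    next
      case (Suc j)
      then have "\<not> t \<le> U j" unfolding k_def by (metis lessI not_less_Least)
      then show ?thesis using U_level[of j t] Suc by simp
    qed
    have "e k = q k * U k" using U_pos[of k] by (simp add: q_def)
    also have "\<dots> \<le> q k * max 0 (2 * U k - t)"
      using q_nonneg[of k] t_le t by (intro mult_left_mono) auto
    finally have "ennreal (e k) \<le> stop_loss N Y t"
      using atoms[of k t] by (rule order.trans[OF ennreal_leI])
    with G_le show ?thesis by (rule order.trans)
  qed
  then show ?thesis using P int by blast
qed


definition sup_stop_loss :: "'i set \<Rightarrow> ('i \<Rightarrow> 'a measure) \<Rightarrow> ('i \<Rightarrow> 'a \<Rightarrow> real) \<Rightarrow> real \<Rightarrow> ennreal" where
  "sup_stop_loss I M X t = (\<Squnion>\<alpha>\<in>I. stop_loss (M \<alpha>) (X \<alpha>) t)"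

lemma half_filterlim_at_top: "filterlim (\<lambda>t::real. t / 2) at_top at_top"
  unfolding filterlim_at_top
proof
  fix Z :: real
  show "eventually (\<lambda>t. Z \<le> t / 2) at_top"
    using eventually_ge_at_top[of "2 * Z"] by eventually_elim simp
qed

text \<open>(ii) \<longleftrightarrow> envelope vanishes, by the two-sided comparison of tail expectation and stop-loss.\<close>
lemma sup_tail_expectation_tendsto_iff:
  assumes pos: "\<And>\<alpha>. \<alpha> \<in> I \<Longrightarrow> pos_rv (M \<alpha>) (X \<alpha>)"
  shows "((\<lambda>t. \<Squnion>\<alpha>\<in>I. tail_expectation (M \<alpha>) (X \<alpha>) t) \<longlongrightarrow> 0) at_top
     \<longleftrightarrow> (sup_stop_loss I M X \<longlongrightarrow> 0) at_top" (is "(?SA \<longlongrightarrow> 0) at_top \<longleftrightarrow> _")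
proof
  assume lim: "(?SA \<longlongrightarrow> 0) at_top"
  have "eventually (\<lambda>t. sup_stop_loss I M X t \<le> ?SA t) at_top"
    using eventually_ge_at_top[of "0::real"]
  proof eventually_elim
    case (elim t)
    then show ?case
      unfolding sup_stop_loss_def using stop_loss_le_tail_expectation[OF pos] by (intro SUP_mono) blast
  qed
  then show "(sup_stop_loss I M X \<longlongrightarrow> 0) at_top"
    by (rule tendsto_sandwich[OF _ _ tendsto_const lim, rotated]) simp
next
  assume lim: "(sup_stop_loss I M X \<longlongrightarrow> 0) at_top"
  have lim2: "((\<lambda>t. 2 * sup_stop_loss I M X (t / 2)) \<longlongrightarrow> 0) at_top"
    using ennreal_tendsto_cmult[of 2, OF _ filterlim_compose[OF lim half_filterlim_at_top]] by simp
  have "eventually (\<lambda>t. ?SA t \<le> 2 * sup_stop_loss I M X (t / 2)) at_top"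
    using eventually_ge_at_top[of "0::real"]
  proof eventually_elim
    case (elim t)
    show ?case
    proof (rule SUP_least)
      fix \<alpha> assume \<alpha>: "\<alpha> \<in> I"
      have "tail_expectation (M \<alpha>) (X \<alpha>) (2 * (t / 2)) \<le> 2 * stop_loss (M \<alpha>) (X \<alpha>) (t / 2)"
        using elim by (intro tail_expectation_le_stop_loss pos \<alpha>) auto
      also have "\<dots> \<le> 2 * sup_stop_loss I M X (t / 2)"
        unfolding sup_stop_loss_def by (intro mult_left_mono SUP_upper \<alpha>) auto
      finally show "tail_expectation (M \<alpha>) (X \<alpha>) t \<le> 2 * sup_stop_loss I M X (t / 2)" by simp
    qed
  qed
  then show "(?SA \<longlongrightarrow> 0) at_top"
    by (rule tendsto_sandwich[OF _ _ tendsto_const lim2, rotated]) simp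
qed

text \<open>(iii) \<longleftrightarrow> envelope vanishes, since by the layer-cake formula the two functions agree on [0, \<infinity>).\<close>
lemma sup_survival_tail_tendsto_iff:
  assumes pos: "\<And>\<alpha>. \<alpha> \<in> I \<Longrightarrow> pos_rv (M \<alpha>) (X \<alpha>)"
  shows "((\<lambda>t. \<Squnion>\<alpha>\<in>I. \<integral>\<^sup>+ u. ennreal (indicator {t..} u * (1 - distr_fun (M \<alpha>) (X \<alpha>) u)) \<partial>lborel)
            \<longlongrightarrow> 0) at_top
     \<longleftrightarrow> (sup_stop_loss I M X \<longlongrightarrow> 0) at_top"
proof (rule tendsto_cong)
  show "eventually (\<lambda>t. (\<Squnion>\<alpha>\<in>I. \<integral>\<^sup>+ u. ennreal (indicator {t..} u * (1 - distr_fun (M \<alpha>) (X \<alpha>) u)) \<partial>lborel)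
      = sup_stop_loss I M X t) at_top"
    using eventually_ge_at_top[of "0::real"]
  proof eventually_elim
    case (elim t)
    then show ?case
      unfolding sup_stop_loss_def using survival_tail_eq_stop_loss[OF pos] by (intro SUP_cong) auto
  qed
qed

text \<open>(i) \<Longrightarrow> envelope vanishes: every stop-loss transform in the family lies below that of the
  integrable dominating variable.\<close>
lemma icx_dominated_imp_sup_stop_loss_tendsto:
  assumes P: "pos_rv N Y" and int: "integrable N Y" and icx: "\<forall>\<alpha>\<in>I. icx_le (M \<alpha>) (X \<alpha>) N Y"
  shows "(sup_stop_loss I M X \<longlongrightarrow> 0) at_top"
proof -
  have "eventually (\<lambda>t. sup_stop_loss I M X t \<le> stop_loss N Y t) at_top"
    using eventually_ge_at_top[of "0::real"]
  proof eventually_elim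
    case (elim t)
    then show ?case
      unfolding sup_stop_loss_def using icx by (intro SUP_least icx_imp_stop_loss_le) auto
  qed
  then show ?thesis
    by (rule tendsto_sandwich[OF _ _ tendsto_const integrable_imp_stop_loss_tendsto[OF P int], rotated])
      simp
qed

text \<open>A vanishing envelope is bounded on [0, \<infinity>): beyond some T it is below 1, and before T
  each stop-loss transform exceeds its value at T by at most T.\<close>
lemma sup_stop_loss_bounded:
  assumes pos: "\<And>\<alpha>. \<alpha> \<in> I \<Longrightarrow> pos_rv (M \<alpha>) (X \<alpha>)" and lim: "(sup_stop_loss I M X \<longlongrightarrow> 0) at_top"
  obtains m where "0 < m" "\<And>t. 0 \<le> t \<Longrightarrow> sup_stop_loss I M X t \<le> ennreal m"
proof -
  have "eventually (\<lambda>t. sup_stop_loss I M X t < 1) at_top"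
    using order_tendstoD(2)[OF lim, of 1] by simp
  then obtain T0 where T0: "\<And>t. T0 \<le> t \<Longrightarrow> sup_stop_loss I M X t < 1"
    unfolding eventually_at_top_linorder by blast
  define T where "T = max 0 T0"
  have "0 \<le> T" and T: "sup_stop_loss I M X T < 1" using T0[of T] by (auto simp: T_def)
  have "sup_stop_loss I M X t \<le> ennreal (T + 1)" if t: "0 \<le> t" for t
    unfolding sup_stop_loss_def
  proof (rule SUP_least)
    fix \<alpha> assume \<alpha>: "\<alpha> \<in> I"
    have "stop_loss (M \<alpha>) (X \<alpha>) t \<le> stop_loss (M \<alpha>) (X \<alpha>) 0" using t by (rule stop_loss_antimono)
    also have "\<dots> \<le> ennreal T + stop_loss (M \<alpha>) (X \<alpha>) T" by (rule stop_loss_zero_le[OF pos[OF \<alpha>] \<open>0 \<le> T\<close>])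
    also have "stop_loss (M \<alpha>) (X \<alpha>) T \<le> sup_stop_loss I M X T"
      unfolding sup_stop_loss_def using \<alpha> by (rule SUP_upper)
    also have "\<dots> \<le> 1" using T by simp
    finally show "stop_loss (M \<alpha>) (X \<alpha>) t \<le> ennreal (T + 1)"
      using \<open>0 \<le> T\<close> by (simp add: ennreal_plus)
  qed
  then show ?thesis using \<open>0 \<le> T\<close> by (intro that[of "T + 1"]) auto
qed

text \<open>Envelope vanishes \<Longrightarrow> (i): dominate the envelope by the stop-loss transform of an integrable
  variable Y; then every member is below Y in stop-loss order, hence in increasing convex order.\<close>
lemma sup_stop_loss_tendsto_imp_icx_dominated:
  assumes pos: "\<And>\<alpha>. \<alpha> \<in> I \<Longrightarrow> pos_rv (M \<alpha>) (X \<alpha>)" and lim: "(sup_stop_loss I M X \<longlongrightarrow> 0) at_top"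
  shows "\<exists>(N :: real measure) Y. pos_rv N Y \<and> integrable N Y \<and> (\<forall>\<alpha>\<in>I. icx_le (M \<alpha>) (X \<alpha>) N Y)"
proof -
  obtain m where "0 < m" "\<And>t. 0 \<le> t \<Longrightarrow> sup_stop_loss I M X t \<le> ennreal m"
    using sup_stop_loss_bounded[OF pos lim] by blast
  then obtain N :: "real measure" and Y where P: "pos_rv N Y" and int: "integrable N Y"
    and dom: "\<And>t. 0 \<le> t \<Longrightarrow> sup_stop_loss I M X t \<le> stop_loss N Y t"
    using stop_loss_dominating[OF lim] by blast
  have "icx_le (M \<alpha>) (X \<alpha>) N Y" if \<alpha>: "\<alpha> \<in> I" for \<alpha>
  proof (rule stop_loss_le_imp_icx[OF pos[OF \<alpha>] P])
    fix t :: real assume "0 < t"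
    have "stop_loss (M \<alpha>) (X \<alpha>) t \<le> sup_stop_loss I M X t"
      unfolding sup_stop_loss_def using \<alpha> by (rule SUP_upper)
    also have "\<dots> \<le> stop_loss N Y t" using dom \<open>0 < t\<close> by simp
    finally show "stop_loss (M \<alpha>) (X \<alpha>) t \<le> stop_loss N Y t" .
  qed
  then show ?thesis using P int by blast
qed

theorem mainTheorem1:
  fixes I :: "'i set" and M :: "'i \<Rightarrow> 'a measure" and X :: "'i \<Rightarrow> 'a \<Rightarrow> real"
  assumes pos: "\<And>\<alpha>. \<alpha> \<in> I \<Longrightarrow> pos_rv (M \<alpha>) (X \<alpha>)"
  shows "((\<exists>(N :: real measure) Y. pos_rv N Y \<and> integrable N Y \<and>
              (\<forall>\<alpha>\<in>I. icx_le (M \<alpha>) (X \<alpha>) N Y))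
          \<longleftrightarrow>
          ((\<lambda>t. \<Squnion>\<alpha>\<in>I. \<integral>\<^sup>+ x. ennreal (X \<alpha> x * indicator {t<..} (X \<alpha> x)) \<partial>M \<alpha>)
              \<longlongrightarrow> 0) at_top)
       \<and>
         (((\<lambda>t. \<Squnion>\<alpha>\<in>I. \<integral>\<^sup>+ x. ennreal (X \<alpha> x * indicator {t<..} (X \<alpha> x)) \<partial>M \<alpha>)
              \<longlongrightarrow> 0) at_top
          \<longleftrightarrow>
          ((\<lambda>t. \<Squnion>\<alpha>\<in>I. \<integral>\<^sup>+ u. ennreal (indicator {t..} u * (1 - distr_fun (M \<alpha>) (X \<alpha>) u)) \<partial>lborel)
              \<longlongrightarrow> 0) at_top)"
proof -
  have tail: "(\<lambda>t. \<Squnion>\<alpha>\<in>I. \<integral>\<^sup>+ x. ennreal (X \<alpha> x * indicator {t<..} (X \<alpha> x)) \<partial>M \<alpha>)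
      = (\<lambda>t. \<Squnion>\<alpha>\<in>I. tail_expectation (M \<alpha>) (X \<alpha>) t)"
    by (simp add: tail_expectation_def)
  have icx_iff: "(\<exists>(N :: real measure) Y. pos_rv N Y \<and> integrable N Y \<and> (\<forall>\<alpha>\<in>I. icx_le (M \<alpha>) (X \<alpha>) N Y))
      \<longleftrightarrow> (sup_stop_loss I M X \<longlongrightarrow> 0) at_top"
    using icx_dominated_imp_sup_stop_loss_tendsto[of _ _ I M X]
      sup_stop_loss_tendsto_imp_icx_dominated[of I M X, OF pos] by blast
  show ?thesis
    unfolding tail using icx_iff sup_tail_expectation_tendsto_iff[of I M X, OF pos]
      sup_survival_tail_tendsto_iff[of I M X, OF pos] by blast
qed

end
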